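(* Let $k\in\mathbb{N}$ and let $\phi:\mathbb{M}_n\to\mathbb{M}_m$ be a $(k+1)$-positive linear map. Then $\mathrm{id}_k\otimes\phi:\mathbb{M}_k\otimes\mathbb{M}_n\to\mathbb{M}_k\otimes\mathbb{M}_m$ is a generalized Schwarz map.
   Context: $\mathbb{M}_n$ denotes the $n\times n$ complex matrices; $\mathrm{id}_k$ is the identity map on $\mathbb{M}_k$, and $\mathbb{M}_k\otimes\mathbb{M}_n\cong\mathbb{M}_{kn}$. A linear map $\phi$ is $j$-positive if $\mathrm{id}_j\otimes\phi$ maps positive semidefinite matrices to positive semidefinite matrices. A linear map $\psi:\mathbb{M}_N\to\mathbb{M}_M$ is a generalized Schwarz map if for all $K\in\mathbb{M}_N$ the block matrix $\begin{pmatrix}\psi(\mathbf{1}_N) & \psi(K)\\ \psi(K)^* & \psi(K^*K)\end{pmatrix}$ is positive semidefinite. *)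

theory Defs
  imports "Jordan_Normal_Form.Matrix"
begin

definition cadj :: "complex mat \<Rightarrow> complex mat" where
  "cadj A = mat (dim_col A) (dim_row A) (\<lambda>(i,j). cnj (A $$ (j,i)))"

definition psd :: "nat \<Rightarrow> complex mat \<Rightarrow> bool" where
  "psd n A \<longleftrightarrow> A \<in> carrier_mat n n \<and>
     (\<forall>v :: nat \<Rightarrow> complex.
        (\<Sum>i<n. \<Sum>j<n. cnj (v i) * A $$ (i,j) * v j) \<in> \<real> \<and>
        Re (\<Sum>i<n. \<Sum>j<n. cnj (v i) * A $$ (i,j) * v j) \<ge> 0)"

definition lin_map :: "nat \<Rightarrow> nat \<Rightarrow> (complex mat \<Rightarrow> complex mat) \<Rightarrow> bool" where
  "lin_map n m \<phi> \<longleftrightarrow>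
     (\<forall>A \<in> carrier_mat n n. \<phi> A \<in> carrier_mat m m) \<and>
     (\<forall>A \<in> carrier_mat n n. \<forall>B \<in> carrier_mat n n. \<phi> (A + B) = \<phi> A + \<phi> B) \<and>
     (\<forall>c. \<forall>A \<in> carrier_mat n n. \<phi> (c \<cdot>\<^sub>m A) = c \<cdot>\<^sub>m \<phi> A)"

text \<open>Block (a,b) of size n x n of a matrix in M_k (x) M_n = M_{kn}
  (Kronecker convention: index (a,i) corresponds to a*n+i).\<close>
definition blk :: "nat \<Rightarrow> complex mat \<Rightarrow> nat \<Rightarrow> nat \<Rightarrow> complex mat" where
  "blk n X a b = mat n n (\<lambda>(i,j). X $$ (a*n+i, b*n+j))"

text \<open>id_k (x) phi : M_k (x) M_n -> M_k (x) M_m, applying phi blockwise.\<close>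
definition ampl :: "nat \<Rightarrow> nat \<Rightarrow> nat \<Rightarrow> (complex mat \<Rightarrow> complex mat) \<Rightarrow> complex mat \<Rightarrow> complex mat" where
  "ampl k n m \<phi> X = mat (k*m) (k*m)
     (\<lambda>(p,q). \<phi> (blk n X (p div m) (q div m)) $$ (p mod m, q mod m))"

definition j_positive :: "nat \<Rightarrow> nat \<Rightarrow> nat \<Rightarrow> (complex mat \<Rightarrow> complex mat) \<Rightarrow> bool" where
  "j_positive j n m \<phi> \<longleftrightarrow>
     (\<forall>X \<in> carrier_mat (j*n) (j*n). psd (j*n) X \<longrightarrow> psd (j*m) (ampl j n m \<phi> X))"

definition gen_schwarz :: "nat \<Rightarrow> nat \<Rightarrow> (complex mat \<Rightarrow> complex mat) \<Rightarrow> bool" where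
  "gen_schwarz N M \<psi> \<longleftrightarrow>
     (\<forall>K \<in> carrier_mat N N.
        psd (2*M) (four_block_mat (\<psi> (1\<^sub>m N)) (\<psi> K) (cadj (\<psi> K)) (\<psi> (cadj K * K))))"

end

theory Submission
  imports Defs "HOL-Library.Complex_Order"
begin

(* The block matrix [[1, K], [K^*, K^*K]] is the sum over r of g_r g_r^*, where g_r is the
   r-th column of [1; K^*].  Since 2-positive maps preserve adjoints, the Schwarz matrix of
   id_k (x) phi is the image of this block matrix under id_2k (x) phi, hence by linearity the
   sum of the images of the g_r g_r^*.  Viewed in C^2k (x) C^n, the vector g_r has nonzero
   components only in the top block containing r and in the k bottom blocks, so each summand
   is a compression of the image of a positive rank-one matrix under id_(k+1) (x) phi, which
   is positive by (k+1)-positivity. *)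

lemma block_index_less: "a < k \<Longrightarrow> i < n \<Longrightarrow> a*n + i < k*(n::nat)"
proof -
  assume "a < k" "i < n"
  then have "a*n + i < (a+1)*n" by simp
  also have "(a+1)*n \<le> k*n" using \<open>a < k\<close> by (intro mult_le_mono1) simp
  finally show ?thesis .
qed

lemma sum_lessThan_mult:
  fixes f :: "nat \<Rightarrow> 'a::comm_monoid_add"
  shows "(\<Sum>p<k*m. f p) = (\<Sum>a<k. \<Sum>s<m. f (a*m + s))"
proof -
  have "(\<Sum>p<k*m. f p) = (\<Sum>a<k. sum f {a*m..<a*m + m})"
    using sum.nat_group[of f m k] by simp
  also have "\<dots> = (\<Sum>a<k. \<Sum>s<m. f (a*m + s))"
  proof (rule sum.cong[OF refl])
    fix a
    show "sum f {a*m..<a*m + m} = (\<Sum>s<m. f (a*m + s))"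
      using sum.shift_bounds_nat_ivl[of f 0 "a*m" m] by (simp add: atLeast0LessThan add.commute)
  qed
  finally show ?thesis .
qed

subsection \<open>Sesquilinear forms and positive semidefinite matrices\<close>

definition sesq_form ::
    "nat \<Rightarrow> complex mat \<Rightarrow> (nat \<Rightarrow> complex) \<Rightarrow> (nat \<Rightarrow> complex) \<Rightarrow> complex" where
  "sesq_form N A v w = (\<Sum>i<N. \<Sum>j<N. cnj (v i) * A $$ (i,j) * w j)"

lemma psd_iff_sesq_form_nonneg: "psd N A \<longleftrightarrow> A \<in> carrier_mat N N \<and> (\<forall>v. 0 \<le> sesq_form N A v v)"
  by (auto simp: psd_def sesq_form_def less_eq_complex_def complex_is_Real_iff)

lemma sesq_form_cong:
  assumes "\<And>i. i < N \<Longrightarrow> v i = v' i" "\<And>j. j < N \<Longrightarrow> w j = w' j"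
  shows "sesq_form N A v w = sesq_form N A v' w'"
  unfolding sesq_form_def using assms by (intro sum.cong refl) auto

lemma sesq_form_zero: "sesq_form N (0\<^sub>m N N) v w = 0"
  by (simp add: sesq_form_def)

lemma sesq_form_add_left: "sesq_form N A (\<lambda>i. v i + v' i) w = sesq_form N A v w + sesq_form N A v' w"
  by (simp add: sesq_form_def ring_distribs sum.distrib)

lemma sesq_form_add_right: "sesq_form N A v (\<lambda>j. w j + w' j) = sesq_form N A v w + sesq_form N A v w'"
  by (simp add: sesq_form_def ring_distribs sum.distrib)

lemma sesq_form_basis:
  assumes "i < N" "j < N"
  shows "sesq_form N A (\<lambda>x. if x = i then a else 0) (\<lambda>x. if x = j then b else 0) = cnj a * A $$ (i,j) * b"
proof -
  have row: "(\<Sum>y<N. cnj (if x = i then a else 0) * A $$ (x,y) * (if y = j then b else 0))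
      = (if x = i then cnj a * A $$ (i,j) * b else 0)" for x
    using assms(2) by (cases "x = i") (simp_all add: if_distrib[of "\<lambda>z. _ * z"] cong: if_cong)
  show ?thesis
    unfolding sesq_form_def row using assms(1) by simp
qed

lemma sesq_form_sum_matrix:
  assumes "\<And>s t. s < N \<Longrightarrow> t < N \<Longrightarrow> M $$ (s,t) = (\<Sum>l\<in>L. B l $$ (s,t))"
  shows "sesq_form N M y w = (\<Sum>l\<in>L. sesq_form N (B l) y w)"
proof -
  have "sesq_form N M y w = (\<Sum>s<N. \<Sum>t<N. \<Sum>l\<in>L. cnj (y s) * B l $$ (s,t) * w t)"
    unfolding sesq_form_def using assms by (simp add: sum_distrib_left sum_distrib_right)
  also have "\<dots> = (\<Sum>s<N. \<Sum>l\<in>L. \<Sum>t<N. cnj (y s) * B l $$ (s,t) * w t)"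
    by (rule sum.cong[OF refl], rule sum.swap)
  also have "\<dots> = (\<Sum>l\<in>L. \<Sum>s<N. \<Sum>t<N. cnj (y s) * B l $$ (s,t) * w t)"
    by (rule sum.swap)
  finally show ?thesis by (simp add: sesq_form_def)
qed

lemma psd_hermitian:
  assumes psd: "psd N A" and "i < N" "j < N"
  shows "A $$ (j,i) = cnj (A $$ (i,j))"
proof -
  define e where "e l c = (\<lambda>x. if x = l then c else (0::complex))" for l :: nat and c
  have real: "sesq_form N A v v \<in> \<real>" for v
    using psd nonnegative_complex_is_real unfolding psd_iff_sesq_form_nonneg by blast
  have diag: "sesq_form N A (e l c) (e l c) = cnj c * A $$ (l,l) * c" if "l < N" for l c
    unfolding e_def by (rule sesq_form_basis[OF that that])
  have "c * A $$ (i,j) + cnj c * A $$ (j,i) \<in> \<real>" for c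
  proof -
    have "sesq_form N A (\<lambda>x. e i 1 x + e j c x) (\<lambda>x. e i 1 x + e j c x)
        = A $$ (i,i) + c * A $$ (i,j) + cnj c * A $$ (j,i) + cnj c * A $$ (j,j) * c"
      unfolding sesq_form_add_left sesq_form_add_right e_def using assms(2,3)
      by (simp add: sesq_form_basis)
    then have "A $$ (i,i) + c * A $$ (i,j) + cnj c * A $$ (j,i) + cnj c * A $$ (j,j) * c \<in> \<real>"
      using real by metis
    moreover have "A $$ (i,i) \<in> \<real>" "cnj c * A $$ (j,j) * c \<in> \<real>"
      using real[of "e i 1"] real[of "e j c"] diag assms(2,3) by auto
    ultimately have "A $$ (i,i) + c * A $$ (i,j) + cnj c * A $$ (j,i) + cnj c * A $$ (j,j) * c
        - A $$ (i,i) - cnj c * A $$ (j,j) * c \<in> \<real>"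
      by (intro Reals_diff)
    then show ?thesis by (simp add: algebra_simps)
  qed
  from this[of 1] this[of \<i>] show ?thesis
    by (intro complex_eqI) (auto simp: complex_is_Real_iff)
qed

definition outer :: "nat \<Rightarrow> (nat \<Rightarrow> complex) \<Rightarrow> (nat \<Rightarrow> complex) \<Rightarrow> complex mat" where
  "outer N u w = mat N N (\<lambda>(i,j). u i * cnj (w j))"

lemma outer_carrier[simp]: "outer N u w \<in> carrier_mat N N"
  by (simp add: outer_def)

lemma psd_outer: "psd N (outer N u u)"
  unfolding psd_iff_sesq_form_nonneg
proof (intro conjI allI outer_carrier)
  fix v
  define S where "S = (\<Sum>i<N. cnj (v i) * u i)"
  have "sesq_form N (outer N u u) v v = (\<Sum>i<N. \<Sum>j<N. (cnj (v i) * u i) * cnj (cnj (v j) * u j))"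
    unfolding sesq_form_def outer_def by (intro sum.cong refl) (simp add: mult_ac)
  also have "\<dots> = S * cnj S"
    unfolding S_def by (simp add: sum_product)
  also have "\<dots> = complex_of_real ((Re S)\<^sup>2 + (Im S)\<^sup>2)"
    by (rule complex_mult_cnj)
  finally show "0 \<le> sesq_form N (outer N u u) v v"
    by (simp add: less_eq_complex_def sum_power2_ge_zero)
qed

definition sum_outer :: "nat \<Rightarrow> nat \<Rightarrow> (nat \<Rightarrow> nat \<Rightarrow> complex) \<Rightarrow> complex mat" where
  "sum_outer N R g = mat N N (\<lambda>(p,q). \<Sum>r<R. g r p * cnj (g r q))"

lemma dim_cadj[simp]: "dim_row (cadj A) = dim_col A" "dim_col (cadj A) = dim_row A"
  by (simp_all add: cadj_def)

lemma index_cadj[simp]: "i < dim_col A \<Longrightarrow> j < dim_row A \<Longrightarrow> cadj A $$ (i,j) = cnj (A $$ (j,i))"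
  by (simp add: cadj_def)

lemma cadj_carrier: "A \<in> carrier_mat r c \<Longrightarrow> cadj A \<in> carrier_mat c r"
  by (auto simp: cadj_def)

lemma index_cadj_mult_self:
  assumes "K \<in> carrier_mat N N" "i < N" "j < N"
  shows "(cadj K * K) $$ (i,j) = (\<Sum>r<N. cnj (K $$ (r,i)) * K $$ (r,j))"
  using assms by (simp add: scalar_prod_def atLeast0LessThan)

subsection \<open>Linear maps and matrix units\<close>

definition mat_unit :: "nat \<Rightarrow> nat \<Rightarrow> nat \<Rightarrow> complex mat" where
  "mat_unit N i j = mat N N (\<lambda>(a,b). if a = i \<and> b = j then 1 else 0)"

lemma lin_map_carrier: "lin_map n m \<phi> \<Longrightarrow> A \<in> carrier_mat n n \<Longrightarrow> \<phi> A \<in> carrier_mat m m"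
  unfolding lin_map_def by blast

lemma lin_map_add:
  "lin_map n m \<phi> \<Longrightarrow> A \<in> carrier_mat n n \<Longrightarrow> B \<in> carrier_mat n n \<Longrightarrow> \<phi> (A + B) = \<phi> A + \<phi> B"
  unfolding lin_map_def by blast

lemma lin_map_smult: "lin_map n m \<phi> \<Longrightarrow> A \<in> carrier_mat n n \<Longrightarrow> \<phi> (c \<cdot>\<^sub>m A) = c \<cdot>\<^sub>m \<phi> A"
  unfolding lin_map_def by blast

lemma lin_map_zero:
  assumes "lin_map n m \<phi>"
  shows "\<phi> (0\<^sub>m n n) = 0\<^sub>m m m"
proof -
  have carrier: "\<phi> (0\<^sub>m n n) \<in> carrier_mat m m"
    using assms by (simp add: lin_map_carrier)
  have "\<phi> (0\<^sub>m n n) = \<phi> (0 \<cdot>\<^sub>m 0\<^sub>m n n)" by simp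
  also have "\<dots> = 0 \<cdot>\<^sub>m \<phi> (0\<^sub>m n n)"
    by (rule lin_map_smult[OF assms zero_carrier_mat])
  also have "\<dots> = 0\<^sub>m m m"
    using carrier by (intro eq_matI) auto
  finally show ?thesis .
qed

lemma lin_map_expand_entry:
  assumes lin: "lin_map n m \<phi>" and A: "A \<in> carrier_mat n n" and st: "s < m" "t < m"
  shows "\<phi> A $$ (s,t) = (\<Sum>i<n. \<Sum>j<n. A $$ (i,j) * \<phi> (mat_unit n i j) $$ (s,t))"
proof -
  define restr where "restr S = mat n n (\<lambda>(i,j). if (i,j) \<in> S then A $$ (i,j) else 0)" for S
  have restr_carrier: "restr S \<in> carrier_mat n n" for S
    by (simp add: restr_def)
  have partial: "\<phi> (restr S) $$ (s,t) = (\<Sum>(i,j)\<in>S. A $$ (i,j) * \<phi> (mat_unit n i j) $$ (s,t))"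
    if "finite S" for S
    using that
  proof (induction S rule: finite_induct)
    case empty
    have "restr {} = 0\<^sub>m n n" by (intro eq_matI) (simp_all add: restr_def)
    then show ?case using st by (simp add: lin_map_zero[OF lin])
  next
    case (insert ij S)
    obtain i j where ij: "ij = (i,j)" by fastforce
    have unit_carrier: "mat_unit n i j \<in> carrier_mat n n"
      by (simp add: mat_unit_def)
    have "restr (insert ij S) = restr S + A $$ (i,j) \<cdot>\<^sub>m mat_unit n i j"
      using insert.hyps(2) by (intro eq_matI) (auto simp: restr_def mat_unit_def ij)
    then have "\<phi> (restr (insert ij S)) = \<phi> (restr S) + A $$ (i,j) \<cdot>\<^sub>m \<phi> (mat_unit n i j)"
      by (simp add: lin_map_add[OF lin] lin_map_smult[OF lin] restr_carrier unit_carrier)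
    moreover have "\<phi> (restr S) \<in> carrier_mat m m" "\<phi> (mat_unit n i j) \<in> carrier_mat m m"
      using lin_map_carrier[OF lin] restr_carrier unit_carrier by auto
    ultimately show ?case
      using insert.IH insert.hyps st by (simp add: ij)
  qed
  have "restr ({..<n} \<times> {..<n}) = A"
    using A by (intro eq_matI) (auto simp: restr_def)
  then have "\<phi> A $$ (s,t) = (\<Sum>(i,j)\<in>{..<n} \<times> {..<n}. A $$ (i,j) * \<phi> (mat_unit n i j) $$ (s,t))"
    using partial[of "{..<n} \<times> {..<n}"] by simp
  then show ?thesis
    by (simp add: sum.cartesian_product)
qed

lemma lin_map_sum_entry:
  assumes lin: "lin_map n m \<phi>" and A: "A \<in> carrier_mat n n"
    and B: "\<And>l. l \<in> L \<Longrightarrow> B l \<in> carrier_mat n n"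
    and AB: "\<And>i j. i < n \<Longrightarrow> j < n \<Longrightarrow> A $$ (i,j) = (\<Sum>l\<in>L. B l $$ (i,j))"
    and st: "s < m" "t < m"
  shows "\<phi> A $$ (s,t) = (\<Sum>l\<in>L. \<phi> (B l) $$ (s,t))"
proof -
  have "\<phi> A $$ (s,t) = (\<Sum>i<n. \<Sum>j<n. \<Sum>l\<in>L. B l $$ (i,j) * \<phi> (mat_unit n i j) $$ (s,t))"
    using AB by (simp add: lin_map_expand_entry[OF lin A st] sum_distrib_right)
  also have "\<dots> = (\<Sum>i<n. \<Sum>l\<in>L. \<Sum>j<n. B l $$ (i,j) * \<phi> (mat_unit n i j) $$ (s,t))"
    by (rule sum.cong[OF refl], rule sum.swap)
  also have "\<dots> = (\<Sum>l\<in>L. \<Sum>i<n. \<Sum>j<n. B l $$ (i,j) * \<phi> (mat_unit n i j) $$ (s,t))"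
    by (rule sum.swap)
  also have "\<dots> = (\<Sum>l\<in>L. \<phi> (B l) $$ (s,t))"
    by (intro sum.cong refl) (simp add: lin_map_expand_entry[OF lin B st])
  finally show ?thesis .
qed

subsection \<open>The amplification \<open>id\<^sub>k \<otimes> \<phi>\<close>\<close>

lemma ampl_entry:
  "p < k*m \<Longrightarrow> q < k*m \<Longrightarrow>
     ampl k n m \<phi> X $$ (p,q) = \<phi> (blk n X (p div m) (q div m)) $$ (p mod m, q mod m)"
  by (simp add: ampl_def)

lemma ampl_carrier: "ampl k n m \<phi> X \<in> carrier_mat (k*m) (k*m)"
  by (simp add: ampl_def)

lemma dim_ampl[simp]: "dim_row (ampl k n m \<phi> X) = k*m" "dim_col (ampl k n m \<phi> X) = k*m"
  by (simp_all add: ampl_def)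

lemma blk_carrier: "blk n X a b \<in> carrier_mat n n"
  by (simp add: blk_def)

lemma sesq_form_ampl:
  "sesq_form (k*m) (ampl k n m \<phi> X) v w =
     (\<Sum>a<k. \<Sum>b<k. sesq_form m (\<phi> (blk n X a b)) (\<lambda>s. v (a*m + s)) (\<lambda>t. w (b*m + t)))"
proof -
  have "sesq_form (k*m) (ampl k n m \<phi> X) v w =
      (\<Sum>a<k. \<Sum>s<m. \<Sum>b<k. \<Sum>t<m. cnj (v (a*m + s)) * \<phi> (blk n X a b) $$ (s,t) * w (b*m + t))"
    unfolding sesq_form_def
    by (simp only: sum_lessThan_mult) (intro sum.cong refl, simp add: ampl_def block_index_less)
  also have "\<dots> = (\<Sum>a<k. \<Sum>b<k. \<Sum>s<m. \<Sum>t<m.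
      cnj (v (a*m + s)) * \<phi> (blk n X a b) $$ (s,t) * w (b*m + t))"
    by (rule sum.cong[OF refl], rule sum.swap)
  finally show ?thesis
    by (simp add: sesq_form_def)
qed

lemma blk_outer:
  assumes "a < k" "b < k"
  shows "blk n (outer (k*n) u w) a b = outer n (\<lambda>i. u (a*n + i)) (\<lambda>j. w (b*n + j))"
  using assms by (intro eq_matI) (simp_all add: blk_def outer_def block_index_less)

lemma blk_sum_outer:
  assumes "a < k" "b < k" "i < n" "j < n"
  shows "blk n (sum_outer (k*n) R g) a b $$ (i,j)
       = (\<Sum>r<R. outer n (\<lambda>i. g r (a*n + i)) (\<lambda>j. g r (b*n + j)) $$ (i,j))"
  using assms by (simp add: blk_def sum_outer_def outer_def block_index_less)

lemma blk_four_block: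
  assumes "A \<in> carrier_mat (k*n) (k*n)" "D \<in> carrier_mat (k*n) (k*n)" "a < k" "b < k"
  shows "blk n (four_block_mat A B C D) a b = blk n A a b"
    and "blk n (four_block_mat A B C D) a (k+b) = blk n B a b"
    and "blk n (four_block_mat A B C D) (k+a) b = blk n C a b"
    and "blk n (four_block_mat A B C D) (k+a) (k+b) = blk n D a b"
proof -
  have rows: "x*n + i < k*n" and rows2: "x*n + i < k*n + k*n" if "x < k" "i < n" for x i
    using block_index_less[OF that] by simp_all
  have shift: "(k+x)*n + i = k*n + (x*n + i)" for x i
    by (simp add: add_mult_distrib)
  show "blk n (four_block_mat A B C D) a b = blk n A a b"
    "blk n (four_block_mat A B C D) a (k+b) = blk n B a b"
    "blk n (four_block_mat A B C D) (k+a) b = blk n C a b"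
    "blk n (four_block_mat A B C D) (k+a) (k+b) = blk n D a b"
    using assms by (intro eq_matI; simp add: blk_def rows rows2 shift)+
qed

lemma four_block_mat_eqI:
  assumes "A \<in> carrier_mat N N" "D \<in> carrier_mat N N" "M \<in> carrier_mat (N+N) (N+N)"
    and "\<And>i j. i < N \<Longrightarrow> j < N \<Longrightarrow> M $$ (i,j) = A $$ (i,j)"
    and "\<And>i j. i < N \<Longrightarrow> j < N \<Longrightarrow> M $$ (i,N+j) = B $$ (i,j)"
    and "\<And>i j. i < N \<Longrightarrow> j < N \<Longrightarrow> M $$ (N+i,j) = C $$ (i,j)"
    and "\<And>i j. i < N \<Longrightarrow> j < N \<Longrightarrow> M $$ (N+i,N+j) = D $$ (i,j)"
  shows "four_block_mat A B C D = M"
proof (rule eq_matI)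
  fix i j assume "i < dim_row M" "j < dim_col M"
  then have ij: "i < N + N" "j < N + N" using assms(3) by auto
  consider "i < N" "j < N" | "i < N" "N \<le> j" | "N \<le> i" "j < N" | "N \<le> i" "N \<le> j"
    by linarith
  then show "four_block_mat A B C D $$ (i,j) = M $$ (i,j)"
  proof cases
    case 1 then show ?thesis using assms ij by simp
  next
    case 2 then show ?thesis using assms(1,2) assms(5)[of i "j - N"] ij by simp
  next
    case 3 then show ?thesis using assms(1,2) assms(6)[of "i - N" j] ij by simp
  next
    case 4 then show ?thesis using assms(1,2) assms(7)[of "i - N" "j - N"] ij by simp
  qed
qed (use assms in simp_all)

lemma ampl_four_block:
  assumes A: "A \<in> carrier_mat (k*n) (k*n)" and D: "D \<in> carrier_mat (k*n) (k*n)"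
  shows "four_block_mat (ampl k n m \<phi> A) (ampl k n m \<phi> B) (ampl k n m \<phi> C) (ampl k n m \<phi> D)
       = ampl (2*k) n m \<phi> (four_block_mat A B C D)"
proof (rule four_block_mat_eqI)
  have dim: "2*k*m = k*m + k*m"
    by (simp add: mult_2 add_mult_distrib)
  show "ampl (2*k) n m \<phi> (four_block_mat A B C D) \<in> carrier_mat (k*m + k*m) (k*m + k*m)"
    using ampl_carrier[of "2*k" n m \<phi>] unfolding dim .
  fix p q assume pq: "p < k*m" "q < k*m"
  then have m: "m \<noteq> 0" by (cases m) auto
  have blocks: "p div m < k" "q div m < k"
    using less_mult_imp_div_less pq by blast+
  have rows: "p < 2*k*m" "q < 2*k*m" "k*m + p < 2*k*m" "k*m + q < 2*k*m"
    unfolding dim using pq by simp_all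
  note simps = ampl_entry blk_four_block[OF A D] pq rows blocks m
  show "ampl (2*k) n m \<phi> (four_block_mat A B C D) $$ (p,q) = ampl k n m \<phi> A $$ (p,q)"
    "ampl (2*k) n m \<phi> (four_block_mat A B C D) $$ (p, k*m + q) = ampl k n m \<phi> B $$ (p,q)"
    "ampl (2*k) n m \<phi> (four_block_mat A B C D) $$ (k*m + p, q) = ampl k n m \<phi> C $$ (p,q)"
    "ampl (2*k) n m \<phi> (four_block_mat A B C D) $$ (k*m + p, k*m + q) = ampl k n m \<phi> D $$ (p,q)"
    by (simp_all add: simps)
qed (simp_all add: ampl_carrier)

subsection \<open>Consequences of \<open>j\<close>-positivity\<close>

lemma j_positive_outer_nonneg:
  assumes "j_positive J n m \<phi>"
  shows "0 \<le> (\<Sum>a<J. \<Sum>b<J. sesq_form m (\<phi> (outer n (u a) (u b))) (y a) (y b))"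
proof -
  define U where "U p = u (p div n) (p mod n)" for p
  define v where "v p = y (p div m) (p mod m)" for p
  have "psd (J*m) (ampl J n m \<phi> (outer (J*n) U U))"
    using assms psd_outer outer_carrier unfolding j_positive_def by blast
  then have "0 \<le> sesq_form (J*m) (ampl J n m \<phi> (outer (J*n) U U)) v v"
    by (simp add: psd_iff_sesq_form_nonneg)
  also have "\<dots> = (\<Sum>a<J. \<Sum>b<J. sesq_form m (\<phi> (outer n (u a) (u b))) (y a) (y b))"
    unfolding sesq_form_ampl
  proof (intro sum.cong refl)
    fix a b assume "a \<in> {..<J}" "b \<in> {..<J}"
    then have "blk n (outer (J*n) U U) a b = outer n (u a) (u b)"
      by (simp add: blk_outer, intro eq_matI) (simp_all add: outer_def U_def)
    then show "sesq_form m (\<phi> (blk n (outer (J*n) U U) a b)) (\<lambda>s. v (a*m + s)) (\<lambda>t. v (b*m + t))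
        = sesq_form m (\<phi> (outer n (u a) (u b))) (y a) (y b)"
      by (simp, intro sesq_form_cong) (simp_all add: v_def)
  qed
  finally show ?thesis .
qed

lemma j_positive_sparse_outer_nonneg:
  fixes \<sigma> :: "nat \<Rightarrow> nat"
  assumes lin: "lin_map n m \<phi>" and pos: "j_positive J n m \<phi>"
    and inj: "inj_on \<sigma> {..<J}" and range: "\<sigma> ` {..<J} \<subseteq> {..<K}"
    and supp: "\<And>P i. P < K \<Longrightarrow> i < n \<Longrightarrow> u P i \<noteq> 0 \<Longrightarrow> P \<in> \<sigma> ` {..<J}"
  shows "0 \<le> (\<Sum>P<K. \<Sum>Q<K. sesq_form m (\<phi> (outer n (u P) (u Q))) (y P) (y Q))"
proof -
  let ?S = "\<sigma> ` {..<J}"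
  let ?f = "\<lambda>P Q. sesq_form m (\<phi> (outer n (u P) (u Q))) (y P) (y Q)"
  have vanish: "?f P Q = 0" if PQ: "P < K" "Q < K" and out: "P \<notin> ?S \<or> Q \<notin> ?S" for P Q
  proof -
    have "u P i * cnj (u Q j) = 0" if "i < n" "j < n" for i j
      using out supp[OF PQ(1) that(1)] supp[OF PQ(2) that(2)] by auto
    then have "outer n (u P) (u Q) = 0\<^sub>m n n"
      by (intro eq_matI) (auto simp: outer_def)
    then show ?thesis
      by (simp add: lin_map_zero[OF lin] sesq_form_zero)
  qed
  have inner: "(\<Sum>Q<K. ?f P Q) = (\<Sum>Q\<in>?S. ?f P Q)" if "P < K" for P
  proof (rule sum.mono_neutral_right[OF finite_lessThan range], rule ballI)
    fix Q assume "Q \<in> {..<K} - ?S"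
    then show "?f P Q = 0" by (simp add: vanish that)
  qed
  have "(\<Sum>P<K. \<Sum>Q<K. ?f P Q) = (\<Sum>P<K. \<Sum>Q\<in>?S. ?f P Q)"
    using inner by simp
  also have "\<dots> = (\<Sum>P\<in>?S. \<Sum>Q\<in>?S. ?f P Q)"
  proof (rule sum.mono_neutral_right[OF finite_lessThan range], rule ballI)
    fix P assume P: "P \<in> {..<K} - ?S"
    have "?f P Q = 0" if "Q \<in> ?S" for Q
      using P range that by (intro vanish) auto
    then show "(\<Sum>Q\<in>?S. ?f P Q) = 0" by simp
  qed
  also have "\<dots> = (\<Sum>a<J. \<Sum>b<J. ?f (\<sigma> a) (\<sigma> b))"
    by (simp add: sum.reindex[OF inj] comp_def)
  finally have eq: "(\<Sum>P<K. \<Sum>Q<K. ?f P Q) = (\<Sum>a<J. \<Sum>b<J. ?f (\<sigma> a) (\<sigma> b))" .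
  show ?thesis
    unfolding eq
    by (rule j_positive_outer_nonneg[OF pos, where u="\<lambda>a. u (\<sigma> a)" and y="\<lambda>a. y (\<sigma> a)"])
qed

lemma j_positive_ampl_sum_outer:
  assumes lin: "lin_map n m \<phi>" and pos: "j_positive J n m \<phi>"
    and sparse: "\<And>r. r < R \<Longrightarrow> \<exists>\<sigma>. inj_on \<sigma> {..<J} \<and> \<sigma> ` {..<J} \<subseteq> {..<K} \<and>
                   (\<forall>P<K. \<forall>i<n. g r (P*n + i) \<noteq> 0 \<longrightarrow> P \<in> \<sigma> ` {..<J})"
  shows "psd (K*m) (ampl K n m \<phi> (sum_outer (K*n) R g))"
  unfolding psd_iff_sesq_form_nonneg
proof (intro conjI allI ampl_carrier)
  fix v :: "nat \<Rightarrow> complex"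
  let ?u = "\<lambda>r P i. g r (P*n + i)" and ?y = "\<lambda>P s. v (P*m + s)"
  have "0 \<le> (\<Sum>r<R. \<Sum>P<K. \<Sum>Q<K. sesq_form m (\<phi> (outer n (?u r P) (?u r Q))) (?y P) (?y Q))"
  proof (rule sum_nonneg)
    fix r assume "r \<in> {..<R}"
    with sparse[of r] obtain \<sigma> where inj: "inj_on \<sigma> {..<J}" and range: "\<sigma> ` {..<J} \<subseteq> {..<K}"
      and supp: "\<forall>P<K. \<forall>i<n. ?u r P i \<noteq> 0 \<longrightarrow> P \<in> \<sigma> ` {..<J}"
      by auto
    show "0 \<le> (\<Sum>P<K. \<Sum>Q<K. sesq_form m (\<phi> (outer n (?u r P) (?u r Q))) (?y P) (?y Q))"
      by (rule j_positive_sparse_outer_nonneg[OF lin pos inj range]) (use supp in blast)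
  qed
  also have "\<dots> = (\<Sum>P<K. \<Sum>r<R. \<Sum>Q<K. sesq_form m (\<phi> (outer n (?u r P) (?u r Q))) (?y P) (?y Q))"
    by (rule sum.swap)
  also have "\<dots> = (\<Sum>P<K. \<Sum>Q<K. \<Sum>r<R. sesq_form m (\<phi> (outer n (?u r P) (?u r Q))) (?y P) (?y Q))"
    by (rule sum.cong[OF refl], rule sum.swap)
  also have "\<dots> = (\<Sum>P<K. \<Sum>Q<K. sesq_form m (\<phi> (blk n (sum_outer (K*n) R g) P Q)) (?y P) (?y Q))"
  proof (intro sum.cong refl)
    fix P Q assume "P \<in> {..<K}" "Q \<in> {..<K}"
    then have PQ: "P < K" "Q < K" by auto
    show "(\<Sum>r<R. sesq_form m (\<phi> (outer n (?u r P) (?u r Q))) (?y P) (?y Q))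
        = sesq_form m (\<phi> (blk n (sum_outer (K*n) R g) P Q)) (?y P) (?y Q)"
      by (rule sesq_form_sum_matrix[symmetric], rule lin_map_sum_entry[OF lin])
        (simp_all add: blk_carrier blk_sum_outer PQ)
  qed
  also have "\<dots> = sesq_form (K*m) (ampl K n m \<phi> (sum_outer (K*n) R g)) v v"
    by (rule sesq_form_ampl[symmetric])
  finally show "0 \<le> sesq_form (K*m) (ampl K n m \<phi> (sum_outer (K*n) R g)) v v" .
qed

lemma j_positive_mat_unit_hermitian:
  assumes pos: "j_positive J n m \<phi>" and J: "2 \<le> J"
    and ij: "i < n" "j < n" and st: "s < m" "t < m"
  shows "\<phi> (mat_unit n j i) $$ (t,s) = cnj (\<phi> (mat_unit n i j) $$ (s,t))"
proof -
  define U where "U p = (if p = i \<or> p = n + j then 1 else 0 :: complex)" for p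
  let ?A = "ampl J n m \<phi> (outer (J*n) U U)"
  have "psd (J*m) ?A"
    using pos psd_outer outer_carrier unfolding j_positive_def by blast
  moreover have idx: "s < J*m" "m + t < J*m"
    using block_index_less[of 0 J s m] block_index_less[of 1 J t m] J st by simp_all
  ultimately have herm: "?A $$ (m + t, s) = cnj (?A $$ (s, m + t))"
    by (rule psd_hermitian)
  have "blk n (outer (J*n) U U) 0 1 = outer n U (\<lambda>b. U (n + b))"
    using J blk_outer[of 0 J 1 n U U] by simp
  also have "\<dots> = mat_unit n i j"
    using ij by (intro eq_matI) (auto simp: outer_def mat_unit_def U_def)
  finally have blk01: "blk n (outer (J*n) U U) 0 1 = mat_unit n i j" .
  have "blk n (outer (J*n) U U) 1 0 = outer n (\<lambda>b. U (n + b)) U"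
    using J blk_outer[of 1 J 0 n U U] by simp
  also have "\<dots> = mat_unit n j i"
    using ij by (intro eq_matI) (auto simp: outer_def mat_unit_def U_def)
  finally have blk10: "blk n (outer (J*n) U U) 1 0 = mat_unit n j i" .
  have m: "m \<noteq> 0" using st by simp
  have e1: "?A $$ (s, m + t) = \<phi> (blk n (outer (J*n) U U) 0 1) $$ (s,t)"
    and e2: "?A $$ (m + t, s) = \<phi> (blk n (outer (J*n) U U) 1 0) $$ (t,s)"
    using idx st m by (simp_all add: ampl_entry div_add_self1)
  show ?thesis
    using herm unfolding e1 e2 blk01 blk10 .
qed

lemma j_positive_cadj:
  assumes lin: "lin_map n m \<phi>" and pos: "j_positive J n m \<phi>" and J: "2 \<le> J"
    and A: "A \<in> carrier_mat n n"
  shows "\<phi> (cadj A) = cadj (\<phi> A)"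
proof (rule eq_matI)
  have cA: "cadj A \<in> carrier_mat n n" using A by (rule cadj_carrier)
  have phiA: "\<phi> A \<in> carrier_mat m m" using lin A by (rule lin_map_carrier)
  fix s t assume "s < dim_row (cadj (\<phi> A))" "t < dim_col (cadj (\<phi> A))"
  then have st: "s < m" "t < m" using phiA by auto
  have "\<phi> (cadj A) $$ (s,t) = (\<Sum>i<n. \<Sum>j<n. cnj (A $$ (j,i)) * \<phi> (mat_unit n i j) $$ (s,t))"
    using A by (simp add: lin_map_expand_entry[OF lin cA st])
  also have "\<dots> = (\<Sum>i<n. \<Sum>j<n. cnj (A $$ (j,i) * \<phi> (mat_unit n j i) $$ (t,s)))"
    using j_positive_mat_unit_hermitian[OF pos J _ _ st(2,1)] by (intro sum.cong refl) simp
  also have "\<dots> = cnj (\<Sum>j<n. \<Sum>i<n. A $$ (j,i) * \<phi> (mat_unit n j i) $$ (t,s))"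
    by (subst sum.swap) simp
  also have "\<dots> = cadj (\<phi> A) $$ (s,t)"
    using phiA st by (simp add: lin_map_expand_entry[OF lin A st(2,1)])
  finally show "\<phi> (cadj A) $$ (s,t) = cadj (\<phi> A) $$ (s,t)" .
qed (use lin_map_carrier[OF lin cadj_carrier[OF A]] lin_map_carrier[OF lin A] in auto)

lemma cadj_ampl:
  assumes herm: "\<And>B. B \<in> carrier_mat n n \<Longrightarrow> \<phi> (cadj B) = cadj (\<phi> B)"
    and lin: "lin_map n m \<phi>" and X: "X \<in> carrier_mat (k*n) (k*n)"
  shows "cadj (ampl k n m \<phi> X) = ampl k n m \<phi> (cadj X)"
proof (rule eq_matI)
  fix p q assume "p < dim_row (ampl k n m \<phi> (cadj X))" "q < dim_col (ampl k n m \<phi> (cadj X))"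
  then have pq: "p < k*m" "q < k*m" by (simp_all add: ampl_def)
  then have m: "0 < m" by (cases m) auto
  have blocks: "p div m < k" "q div m < k"
    using less_mult_imp_div_less pq by blast+
  let ?B = "blk n X (q div m) (p div m)"
  have blk: "blk n (cadj X) (p div m) (q div m) = cadj ?B"
    using X blocks by (intro eq_matI) (simp_all add: blk_def block_index_less)
  have "cadj (ampl k n m \<phi> X) $$ (p,q) = cnj (\<phi> ?B $$ (q mod m, p mod m))"
    using pq by (simp add: ampl_entry ampl_carrier)
  also have "\<dots> = cadj (\<phi> ?B) $$ (p mod m, q mod m)"
    using lin_map_carrier[OF lin blk_carrier[of n X "q div m" "p div m"]] m by simp
  also have "\<dots> = ampl k n m \<phi> (cadj X) $$ (p,q)"
    using pq by (simp add: ampl_entry blk herm blk_carrier)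
  finally show "cadj (ampl k n m \<phi> X) $$ (p,q) = ampl k n m \<phi> (cadj X) $$ (p,q)" .
qed (simp_all add: ampl_def)

subsection \<open>The Schwarz block matrix\<close>

text \<open>The \<open>r\<close>-th column of \<open>[1; K\<^sup>*]\<close>.\<close>

definition schwarz_vec :: "nat \<Rightarrow> complex mat \<Rightarrow> nat \<Rightarrow> nat \<Rightarrow> complex" where
  "schwarz_vec N K r p = (if p < N then (if p = r then 1 else 0) else cnj (K $$ (r, p - N)))"

lemma schwarz_block_sum_outer:
  assumes K: "K \<in> carrier_mat N N"
  shows "four_block_mat (1\<^sub>m N) K (cadj K) (cadj K * K) = sum_outer (2*N) N (schwarz_vec N K)"
proof (rule four_block_mat_eqI)
  show "cadj K * K \<in> carrier_mat N N"
    using K by (metis cadj_carrier mult_carrier_mat)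
  show "sum_outer (2*N) N (schwarz_vec N K) \<in> carrier_mat (N+N) (N+N)"
    by (simp add: sum_outer_def mult_2)
  fix i j assume ij: "i < N" "j < N"
  then have idx: "i < 2*N" "j < 2*N" "N + i < 2*N" "N + j < 2*N" by simp_all
  have dims: "dim_row K = N" "dim_col K = N" using K by auto
  note simps = sum_outer_def schwarz_vec_def if_distrib[of "\<lambda>z. z * _"] if_distrib[of "\<lambda>z. _ * z"]
    if_distrib[of cnj] index_cadj_mult_self[OF K ij] K ij idx dims
  show "sum_outer (2*N) N (schwarz_vec N K) $$ (i,j) = 1\<^sub>m N $$ (i,j)"
    "sum_outer (2*N) N (schwarz_vec N K) $$ (i, N+j) = K $$ (i,j)"
    "sum_outer (2*N) N (schwarz_vec N K) $$ (N+i, j) = cadj K $$ (i,j)"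
    "sum_outer (2*N) N (schwarz_vec N K) $$ (N+i, N+j) = (cadj K * K) $$ (i,j)"
    by (simp_all add: simps cong: if_cong)
qed simp

lemma schwarz_vec_block_sparse:
  assumes r: "r < k*n"
  shows "\<exists>\<sigma>. inj_on \<sigma> {..<k+1} \<and> \<sigma> ` {..<k+1} \<subseteq> {..<2*k} \<and>
           (\<forall>P<2*k. \<forall>i<n. schwarz_vec (k*n) K r (P*n + i) \<noteq> 0 \<longrightarrow> P \<in> \<sigma> ` {..<k+1})"
proof -
  define \<sigma> where "\<sigma> a = (if a = 0 then r div n else k + a - 1)" for a
  have top: "r div n < k"
    using r by (simp add: less_mult_imp_div_less)
  have "inj_on \<sigma> {..<k+1}"
    using top by (auto simp: inj_on_def \<sigma>_def split: if_splits)
  moreover have "\<sigma> ` {..<k+1} \<subseteq> {..<2*k}"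
    using top by (auto simp: \<sigma>_def)
  moreover have "P \<in> \<sigma> ` {..<k+1}"
    if "P < 2*k" "i < n" "schwarz_vec (k*n) K r (P*n + i) \<noteq> 0" for P i
  proof (cases "P < k")
    case True
    then have "P*n + i = r"
      using that block_index_less[OF True \<open>i < n\<close>] by (simp add: schwarz_vec_def split: if_splits)
    then have "P = \<sigma> 0"
      using \<open>i < n\<close> by (auto simp: \<sigma>_def)
    then show ?thesis by (intro rev_image_eqI[of 0]) auto
  next
    case False
    then have "P = \<sigma> (P - k + 1)" by (simp add: \<sigma>_def)
    moreover have "P - k + 1 < k + 1" using \<open>P < 2*k\<close> by simp
    ultimately show ?thesis by (intro rev_image_eqI[of "P - k + 1"]) auto
  qed
  ultimately show ?thesis by blast
qed

theorem theoremA1: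
  fixes k n m :: nat and \<phi> :: "complex mat \<Rightarrow> complex mat"
  assumes "lin_map n m \<phi>"
    and "j_positive (k+1) n m \<phi>"
  shows "gen_schwarz (k*n) (k*m) (ampl k n m \<phi>)"
proof (cases "k = 0")
  case True
  then show ?thesis by (simp add: gen_schwarz_def psd_def four_block_mat_def ampl_def)
next
  case False
  have herm: "\<phi> (cadj B) = cadj (\<phi> B)" if "B \<in> carrier_mat n n" for B
    by (rule j_positive_cadj[OF assms]) (use False that in auto)
  show ?thesis unfolding gen_schwarz_def
  proof
    fix K :: "complex mat" assume K: "K \<in> carrier_mat (k*n) (k*n)"
    have KK: "cadj K * K \<in> carrier_mat (k*n) (k*n)"
      using K by (metis cadj_carrier mult_carrier_mat)
    have "psd ((2*k)*m) (ampl (2*k) n m \<phi> (sum_outer ((2*k)*n) (k*n) (schwarz_vec (k*n) K)))"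
      by (rule j_positive_ampl_sum_outer[OF assms]) (rule schwarz_vec_block_sparse)
    then have "psd (2*(k*m)) (ampl (2*k) n m \<phi> (four_block_mat (1\<^sub>m (k*n)) K (cadj K) (cadj K * K)))"
      by (simp add: schwarz_block_sum_outer[OF K] mult.assoc)
    then show "psd (2*(k*m)) (four_block_mat (ampl k n m \<phi> (1\<^sub>m (k*n))) (ampl k n m \<phi> K)
        (cadj (ampl k n m \<phi> K)) (ampl k n m \<phi> (cadj K * K)))"
      by (simp add: cadj_ampl[OF herm assms(1) K] ampl_four_block[OF one_carrier_mat KK])
  qed
qed

end
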